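(* The following functions are real primitive recursive: for each $n\in\mathbf N$, the total $n$-ary constant functions $\mathbf R^n\to\mathbf R$ with values $0$, $1$, $-1$; for each $n\in\mathbf N$ and $i<n$, the projection $\mathbf R^n\to\mathbf R$ onto the $i$-th coordinate; the total binary addition and multiplication $\mathbf R^2\to\mathbf R$; the functions $x\mapsto 1/x$, $x\mapsto\sqrt x$ and $x\mapsto\ln x$, each with domain exactly $(0,\infty)$; the total functions $\sin$, $\cos$, $\exp$ on $\mathbf R$; and the nullary function with value $\pi$.
   Context: Functions may be partial: $f:\subseteq\mathbf R^m\to\mathbf R^n$ has domain $\operatorname{dom} f\subseteq\mathbf R^m$; $\mathbf R^0$ is a one-point space, and a nullary function is a function on it. Juxtaposition: $[g_0,\dots,g_{n-1}]\vec x=(g_0\vec x,\dots,g_{n-1}\vec x)$, defined exactly when $\vec x\in\bigcap_j\operatorname{dom} g_j$. Composition: $(f\circ g)\vec x=f(g\vec x)$, defined exactly when $\vec x\in\operatorname{dom} g$ and $g\vec x\in\operatorname{dom} f$. Differential recursion: for $f:\subseteq\mathbf R^m\to\mathbf R^n$, $g:\subseteq\mathbf R^{m+1+n}\to\mathbf R^n$ and $\vec v\in\mathbf R^m$, let $H_{\vec v}$ be the set of all $h:\subseteq\mathbf R\to\mathbf R^n$ such that (1) $\operatorname{dom} h$ is empty or a (possibly unbounded) interval containing $0$; (2) $\vec v\in\operatorname{dom} f$ if $\operatorname{dom} h\ne\emptyset$; (3) $(\vec v,\tau,h\tau)\in\operatorname{dom} g$ for every $\tau\in\operatorname{dom} h$;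 (4) $h t=f\vec v+\int_0^t g(\vec v,\tau,h\tau)\,d\tau$ for every $t\in\operatorname{dom} h$. A function $h\in H$ is unique in a set $H$ if for every $h'\in H$, $h'$ and $h$ agree on $\operatorname{dom} h\cap\operatorname{dom} h'$. Let $K_{\vec v}$ be the set of functions unique in $H_{\vec v}$ (these agree on common domains) and let $h_{\vec v}$ be their union. Define $\mathrm{PR}(f,g):\subseteq\mathbf R^{m+1}\to\mathbf R^n$ by $\operatorname{dom}\mathrm{PR}(f,g)=\{(\vec v,t)\mid t\in\operatorname{dom} h_{\vec v}\}$ and $\mathrm{PR}(f,g)(\vec v,t)=h_{\vec v}t$. The class of real primitive recursive functions is the smallest class containing the nullary functions with values $0$, $1$, $-1$ and closed under juxtaposition, composition and $\mathrm{PR}$. *)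

theory Defs
  imports "HOL-Analysis.Analysis"
begin

text \<open>
  A partial function R^m -> R^n is represented by its arity m, coarity n and a map
  F :: real list => real list option. Points of R^m are lists of length m;
  F xs = None means xs is outside the domain. All functions built below are
  canonical: F xs = None whenever length xs is not m, and F xs = Some ys implies
  length ys = n.
\<close>

type_synonym pfun = "real list \<Rightarrow> real list option"

definition nconst :: "real \<Rightarrow> pfun" where
  "nconst c = (\<lambda>xs. if xs = [] then Some [c] else None)"

definition juxt :: "nat \<Rightarrow> pfun list \<Rightarrow> pfun" where
  "juxt m gs = (\<lambda>xs. if length xs = m \<and> (\<forall>g\<in>set gs. g xs \<noteq> None)
                      then Some (map (\<lambda>g. hd (the (g xs))) gs) else None)"

definition pcomp :: "pfun \<Rightarrow> pfun \<Rightarrow> pfun" where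
  "pcomp f g = (\<lambda>xs. case g xs of None \<Rightarrow> None | Some ys \<Rightarrow> f ys)"

text \<open>The set H_v of candidate solutions, given as pairs (domain D, function h).
  Integrals are Lebesgue integrals; LBINT over 0..t is oriented (negative for t < 0).\<close>
definition PR_H :: "nat \<Rightarrow> pfun \<Rightarrow> pfun \<Rightarrow> real list \<Rightarrow> (real set \<times> (real \<Rightarrow> real list)) set" where
  "PR_H n f g v = {(D, h).
      (D = {} \<or> (is_interval D \<and> 0 \<in> D)) \<and>
      (D \<noteq> {} \<longrightarrow> f v \<noteq> None) \<and>
      (\<forall>\<tau>\<in>D. g (v @ [\<tau>] @ h \<tau>) \<noteq> None) \<and>
      (\<forall>t\<in>D. length (h t) = n \<and>
         (\<forall>k<n. interval_lebesgue_integrable lborel (ereal 0) (ereal t)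
                   (\<lambda>\<tau>. the (g (v @ [\<tau>] @ h \<tau>)) ! k) \<and>
                h t ! k = the (f v) ! k
                   + (LBINT \<tau>=ereal 0..ereal t. the (g (v @ [\<tau>] @ h \<tau>)) ! k)))}"

definition PR_K :: "nat \<Rightarrow> pfun \<Rightarrow> pfun \<Rightarrow> real list \<Rightarrow> (real set \<times> (real \<Rightarrow> real list)) set" where
  "PR_K n f g v = {(D, h) \<in> PR_H n f g v.
      \<forall>(D', h') \<in> PR_H n f g v. \<forall>t \<in> D \<inter> D'. h t = h' t}"

definition PR :: "nat \<Rightarrow> nat \<Rightarrow> pfun \<Rightarrow> pfun \<Rightarrow> pfun" where
  "PR m n f g = (\<lambda>xs.
     if length xs = m + 1 \<and> (\<exists>(D, h) \<in> PR_K n f g (take m xs). last xs \<in> D)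
     then Some ((SOME y. \<exists>(D, h) \<in> PR_K n f g (take m xs). last xs \<in> D \<and> y = h (last xs)))
     else None)"

inductive rpr :: "nat \<Rightarrow> nat \<Rightarrow> pfun \<Rightarrow> bool" where
  zero: "rpr 0 1 (nconst 0)"
| one: "rpr 0 1 (nconst 1)"
| mone: "rpr 0 1 (nconst (-1))"
| juxt: "(\<forall>g\<in>set gs. rpr m 1 g) \<Longrightarrow> rpr m (length gs) (juxt m gs)"
| comp: "rpr k n f \<Longrightarrow> rpr m k g \<Longrightarrow> rpr m n (pcomp f g)"
| pr: "rpr m n f \<Longrightarrow> rpr (m + 1 + n) n g \<Longrightarrow> rpr (m + 1) n (PR m n f g)"

end

theory Submission
  imports Defs
begin

(* Each function of the theorem is obtained from the three nullary constants by
   juxtaposition, composition and differential recursion PR.  The only real work is to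
   compute PR(f,g): for fixed parameters v it is the maximal solution of the initial value
   problem z' = Phi(s, z), z(0) = f v, where g represents Phi.  We show (PR_eval_ode) that
   if Y solves this problem on an interval D0 around 0 and every solution on a compact
   interval around 0 stays in D0 and agrees with Y, then PR(f,g)(v, t) = Y t for t in D0
   and is undefined elsewhere.  This rests on the equivalence between the integral equation
   in the definition of PR and the differential equation (fundamental theorem of calculus).
   With real-valued functions written as rfun m P F (arity m, domain P, values F) we then
   derive constants, projections (t = int_0^t 1), addition and multiplication (antiderivatives),
   exp (y' = y), ln(1 + t) (y' = e^{-y}, whose maximal solution lives on (-1, oo)), and from
   these ln, 1/x, sqrt, arctan (an antiderivative), pi = 4 arctan 1, and sin, cos as the
   components of the system (s, c)' = (c, -s).  Uniqueness of each concrete solution is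
   shown by exhibiting a quantity with derivative 0. *)

lemma lebesgue_interval_integral_HK:
  fixes G :: "real \<Rightarrow> real"
  assumes "a \<le> b" "interval_lebesgue_integrable lborel (ereal a) (ereal b) G"
  shows "G integrable_on {a..b}" "(LBINT \<tau>=ereal a..ereal b. G \<tau>) = integral {a..b} G"
proof -
  have "set_integrable lborel {a<..<b} G"
    using assms unfolding interval_lebesgue_integrable_def by simp
  moreover have "set_integrable lborel {a<..<b} G \<longleftrightarrow> set_integrable lborel {a..b} G"
    by (rule set_integrable_discrete_difference[where X="{a,b}"]) auto
  ultimately have G: "set_integrable lborel {a..b} G" by simp
  show "G integrable_on {a..b}" using set_borel_integral_eq_integral(1)[OF G] .
  show "(LBINT \<tau>=ereal a..ereal b. G \<tau>) = integral {a..b} G"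
    using set_borel_integral_eq_integral(2)[OF G] interval_integral_Icc[OF assms(1), of G] by simp
qed

lemma segment_subset_interval:
  "is_interval D \<Longrightarrow> 0 \<in> D \<Longrightarrow> t \<in> D \<Longrightarrow> {min 0 t..max 0 t} \<subseteq> (D::real set)"
  using closed_segment_subset[of 0 D t] is_interval_convex[of D] closed_segment_eq_real_ivl[of 0 t]
  by (auto simp: min_def max_def split: if_splits)

lemma continuous_interval_integrable:
  "continuous_on {min a b..max a b} G \<Longrightarrow> interval_lebesgue_integrable lborel (ereal a) (ereal b) G"
  by (cases "a \<le> b")
     (auto intro: interval_integrable_continuous_on
        interval_integrable_endpoints_reverse[THEN iffD2, OF interval_integrable_continuous_on]
        simp: min_def max_def)

lemma integral_equation_indefinite:
  fixes G H :: "real \<Rightarrow> real"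
  assumes lo: "lo \<le> 0" and hi: "0 \<le> hi"
    and eqn: "\<And>s. s \<in> {lo..hi} \<Longrightarrow> interval_lebesgue_integrable lborel (ereal 0) (ereal s) G
                  \<and> H s = c + (LBINT \<tau>=ereal 0..ereal s. G \<tau>)"
  shows "G integrable_on {lo..hi}"
    and "s \<in> {lo..hi} \<Longrightarrow> H s = c + integral {lo..s} G - integral {lo..0} G"
proof -
  have "G integrable_on {0..hi}"
    using eqn[of hi] lo hi lebesgue_interval_integral_HK(1)[of 0 hi G] by auto
  moreover have "interval_lebesgue_integrable lborel (ereal lo) (ereal 0) G"
    using eqn[of lo] lo hi interval_integrable_endpoints_reverse by auto
  then have "G integrable_on {lo..0}" using lo lebesgue_interval_integral_HK(1) by blast
  ultimately show iG: "G integrable_on {lo..hi}"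
    using Henstock_Kurzweil_Integration.integrable_combine[OF lo hi] by blast
  assume s: "s \<in> {lo..hi}"
  show "H s = c + integral {lo..s} G - integral {lo..0} G"
  proof (cases "0 \<le> s")
    case True
    have "H s = c + integral {0..s} G"
      using eqn[OF s] lebesgue_interval_integral_HK(2)[OF True] by simp
    moreover have "integral {lo..0} G + integral {0..s} G = integral {lo..s} G"
      using s lo True integrable_subinterval_real[OF iG, of lo s]
      by (intro Henstock_Kurzweil_Integration.integral_combine) auto
    ultimately show ?thesis by simp
  next
    case False
    have "interval_lebesgue_integrable lborel (ereal s) (ereal 0) G"
      using eqn[OF s] interval_integrable_endpoints_reverse by blast
    then have "H s = c - integral {s..0} G"
      using eqn[OF s] lebesgue_interval_integral_HK(2)[of s 0 G] False
        interval_integral_endpoints_reverse[of "ereal 0" "ereal s" G] by simp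
    moreover have "integral {lo..s} G + integral {s..0} G = integral {lo..0} G"
      using s hi False integrable_subinterval_real[OF iG, of lo 0]
      by (intro Henstock_Kurzweil_Integration.integral_combine) auto
    ultimately show ?thesis by simp
  qed
qed

lemma integral_equation_regular:
  fixes G H :: "real \<Rightarrow> real"
  assumes lo: "lo \<le> 0" and hi: "0 \<le> hi"
    and eqn: "\<And>s. s \<in> {lo..hi} \<Longrightarrow> interval_lebesgue_integrable lborel (ereal 0) (ereal s) G
                  \<and> H s = c + (LBINT \<tau>=ereal 0..ereal s. G \<tau>)"
  shows "continuous_on {lo..hi} H"
    and "continuous_on {lo..hi} G \<Longrightarrow> s \<in> {lo..hi} \<Longrightarrow> (H has_real_derivative G s) (at s within {lo..hi})"
proof -
  define I where "I = (\<lambda>x. integral {lo..x} G)"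
  have H_eq: "\<And>s. s \<in> {lo..hi} \<Longrightarrow> H s = c + I s - I 0"
    unfolding I_def by (rule integral_equation_indefinite(2)[OF lo hi eqn])
  have cI: "continuous_on {lo..hi} I"
    unfolding I_def by (rule indefinite_integral_continuous_1[OF integral_equation_indefinite(1)[OF lo hi eqn]])
  show "continuous_on {lo..hi} H"
    by (rule continuous_on_eq[where f="\<lambda>s. c + I s - I 0"]) (auto intro!: continuous_intros cI simp: H_eq)
  assume cG: "continuous_on {lo..hi} G" and s: "s \<in> {lo..hi}"
  have "((\<lambda>s. c + I s - I 0) has_real_derivative G s) (at s within {lo..hi})"
    unfolding I_def using integral_has_real_derivative[OF cG s] by (auto intro!: derivative_eq_intros)
  then show "(H has_real_derivative G s) (at s within {lo..hi})"
    by (rule has_field_derivative_transform_within[OF _ zero_less_one s]) (simp add: H_eq)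
qed

definition ode_solution ::
    "nat \<Rightarrow> (real \<Rightarrow> real list \<Rightarrow> real list) \<Rightarrow> real list \<Rightarrow> real set \<Rightarrow> (real \<Rightarrow> real list) \<Rightarrow> bool" where
  "ode_solution n \<Phi> c S z \<longleftrightarrow> z 0 = c \<and>
     (\<forall>s\<in>S. length (z s) = n \<and>
        (\<forall>k<n. ((\<lambda>s. z s ! k) has_real_derivative \<Phi> s (z s) ! k) (at s within S)))"

definition preserves_continuity :: "nat \<Rightarrow> (real \<Rightarrow> real list \<Rightarrow> real list) \<Rightarrow> bool" where
  "preserves_continuity n \<Phi> \<longleftrightarrow>
     (\<forall>S z. (\<forall>s\<in>S. length (z s) = n) \<longrightarrow> (\<forall>k<n. continuous_on S (\<lambda>s. z s ! k))
        \<longrightarrow> (\<forall>k<n. continuous_on S (\<lambda>s. \<Phi> s (z s) ! k)))"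

lemma ode_solution_continuous:
  assumes "ode_solution n \<Phi> c S z" "k < n"
  shows "continuous_on S (\<lambda>s. z s ! k)"
  using assms DERIV_continuous unfolding ode_solution_def continuous_on_eq_continuous_within by blast

lemma ode_solution_rhs_continuous:
  assumes "preserves_continuity n \<Phi>" "ode_solution n \<Phi> c S z" "k < n"
  shows "continuous_on S (\<lambda>s. \<Phi> s (z s) ! k)"
  using assms ode_solution_continuous[OF assms(2)]
  unfolding preserves_continuity_def ode_solution_def by blast

text \<open>A solution on an interval around 0 is a candidate in H_v, by the fundamental theorem
  of calculus: the right-hand side is continuous along the solution.\<close>
lemma ode_solution_in_PR_H:
  assumes fv: "f v = Some c"
    and g_eq: "\<And>\<tau> z. length z = n \<Longrightarrow> g (v @ [\<tau>] @ z) = Some (\<Phi> \<tau> z)"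
    and \<Phi>: "preserves_continuity n \<Phi>"
    and D: "is_interval D" "0 \<in> D" and Y: "ode_solution n \<Phi> c D Y"
  shows "(D, Y) \<in> PR_H n f g v"
proof -
  have lY: "\<And>t. t \<in> D \<Longrightarrow> length (Y t) = n" using Y by (simp add: ode_solution_def)
  have "interval_lebesgue_integrable lborel (ereal 0) (ereal t) (\<lambda>\<tau>. the (g (v @ [\<tau>] @ Y \<tau>)) ! k)
        \<and> Y t ! k = c ! k + (LBINT \<tau>=ereal 0..ereal t. the (g (v @ [\<tau>] @ Y \<tau>)) ! k)"
    if t: "t \<in> D" and k: "k < n" for t k
  proof -
    let ?J = "{min 0 t..max 0 t}"
    have J: "?J \<subseteq> D" by (rule segment_subset_interval[OF D t])
    have G_eq: "\<And>\<tau>. \<tau> \<in> ?J \<Longrightarrow> the (g (v @ [\<tau>] @ Y \<tau>)) ! k = \<Phi> \<tau> (Y \<tau>) ! k"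
      using J g_eq lY by auto
    have cG: "continuous_on ?J (\<lambda>\<tau>. the (g (v @ [\<tau>] @ Y \<tau>)) ! k)"
      using continuous_on_subset[OF ode_solution_rhs_continuous[OF \<Phi> Y k] J] G_eq
      by (auto intro: continuous_on_eq)
    have "(LBINT \<tau>=ereal 0..ereal t. the (g (v @ [\<tau>] @ Y \<tau>)) ! k) = Y t ! k - Y 0 ! k"
    proof (rule interval_integral_FTC_finite[OF cG])
      fix x assume "min 0 t \<le> x" "x \<le> max 0 t"
      then have x: "x \<in> ?J" by simp
      have "((\<lambda>s. Y s ! k) has_real_derivative \<Phi> x (Y x) ! k) (at x within D)"
        using Y J x k by (auto simp: ode_solution_def)
      then have "((\<lambda>s. Y s ! k) has_real_derivative \<Phi> x (Y x) ! k) (at x within ?J)"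
        using J by (rule DERIV_subset)
      then show "((\<lambda>s. Y s ! k) has_vector_derivative the (g (v @ [x] @ Y x)) ! k) (at x within ?J)"
        using G_eq[OF x] by (simp add: has_real_derivative_iff_has_vector_derivative)
    qed
    then show ?thesis
      using continuous_interval_integrable[OF cG] Y by (simp add: ode_solution_def)
  qed
  then show ?thesis unfolding PR_H_def using D fv g_eq lY by auto
qed

text \<open>Conversely, every candidate in H_v solves the initial value problem on each segment
  [0, t] (or [t, 0]) inside its domain: the integral equation makes it continuous, hence the
  integrand continuous, hence the candidate differentiable.\<close>
lemma PR_H_ode_solution:
  assumes fv: "f v = Some c" and lc: "length c = n"
    and g_eq: "\<And>\<tau> z. length z = n \<Longrightarrow> g (v @ [\<tau>] @ z) = Some (\<Phi> \<tau> z)"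
    and \<Phi>: "preserves_continuity n \<Phi>"
    and Dh: "(D, h) \<in> PR_H n f g v" and t: "t \<in> D"
  shows "ode_solution n \<Phi> c {min 0 t..max 0 t} h"
proof -
  let ?J = "{min 0 t..max 0 t}"
  have D: "is_interval D" "0 \<in> D" using Dh t unfolding PR_H_def by auto
  have J: "?J \<subseteq> D" by (rule segment_subset_interval[OF D t])
  have eqn: "\<And>s. s \<in> D \<Longrightarrow> length (h s) = n \<and> (\<forall>k<n.
      interval_lebesgue_integrable lborel (ereal 0) (ereal s) (\<lambda>\<tau>. the (g (v @ [\<tau>] @ h \<tau>)) ! k)
      \<and> h s ! k = c ! k + (LBINT \<tau>=ereal 0..ereal s. the (g (v @ [\<tau>] @ h \<tau>)) ! k))"
    using Dh fv unfolding PR_H_def by auto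
  have lh: "\<And>s. s \<in> ?J \<Longrightarrow> length (h s) = n" using eqn J by blast
  have G_eq: "\<And>\<tau> k. \<tau> \<in> ?J \<Longrightarrow> the (g (v @ [\<tau>] @ h \<tau>)) ! k = \<Phi> \<tau> (h \<tau>) ! k"
    using g_eq lh by auto
  have ch: "continuous_on ?J (\<lambda>s. h s ! k)" if k: "k < n" for k
    by (rule integral_equation_regular(1)[where c="c ! k" and G="\<lambda>\<tau>. the (g (v @ [\<tau>] @ h \<tau>)) ! k"])
       (use eqn J k in auto)
  have cG: "continuous_on ?J (\<lambda>\<tau>. the (g (v @ [\<tau>] @ h \<tau>)) ! k)" if k: "k < n" for k
  proof (rule continuous_on_eq)
    show "continuous_on ?J (\<lambda>\<tau>. \<Phi> \<tau> (h \<tau>) ! k)"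
      using \<Phi> lh ch k unfolding preserves_continuity_def by blast
  qed (use G_eq in simp)
  have dh: "((\<lambda>s. h s ! k) has_real_derivative \<Phi> s (h s) ! k) (at s within ?J)"
    if s: "s \<in> ?J" and k: "k < n" for s k
  proof -
    have "((\<lambda>s. h s ! k) has_real_derivative the (g (v @ [s] @ h s)) ! k) (at s within ?J)"
      by (rule integral_equation_regular(2)[where c="c ! k", OF _ _ _ cG[OF k] s])
         (use eqn J k in auto)
    then show ?thesis using G_eq[OF s] by simp
  qed
  have "h 0 = c"
    using eqn[OF D(2)] lc by (auto intro: nth_equalityI)
  then show ?thesis unfolding ode_solution_def using lh dh by blast
qed

text \<open>How PR is evaluated at (v, t): if the candidate (D0, Y) extends every candidate in H_v,
  then it is unique in H_v, every unique candidate agrees with it, and so PR(f,g)(v,t)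
  is Y t for t in D0 and undefined otherwise.\<close>
lemma PR_eval_greatest_candidate:
  assumes lv: "length v = m" and DY: "(D0, Y) \<in> PR_H n f g v"
    and greatest: "\<And>D h t. (D, h) \<in> PR_H n f g v \<Longrightarrow> t \<in> D \<Longrightarrow> t \<in> D0 \<and> h t = Y t"
  shows "PR m n f g (v @ [t]) = (if t \<in> D0 then Some (Y t) else None)"
proof -
  have greatest_K: "t \<in> D0 \<and> h t = Y t" if "(D, h) \<in> PR_K n f g v" "t \<in> D" for D h t
    using greatest that unfolding PR_K_def by blast
  have "\<forall>(D, h) \<in> PR_H n f g v. \<forall>t \<in> D0 \<inter> D. Y t = h t"
    using greatest by fastforce
  then have DY_K: "(D0, Y) \<in> PR_K n f g v"
    using DY unfolding PR_K_def by blast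
  have dom: "(\<exists>(D, h) \<in> PR_K n f g v. t \<in> D) \<longleftrightarrow> t \<in> D0"
    using DY_K greatest_K by auto
  have val: "(SOME y. \<exists>(D, h) \<in> PR_K n f g v. t \<in> D \<and> y = h t) = Y t" if t: "t \<in> D0"
  proof (rule some_equality)
    show "\<exists>(D, h) \<in> PR_K n f g v. t \<in> D \<and> Y t = h t" using DY_K t by blast
  qed (use greatest_K in fastforce)
  show ?thesis unfolding PR_def using lv dom val by simp
qed

lemma PR_eval_ode:
  assumes lv: "length v = m" and fv: "f v = Some c" and lc: "length c = n"
    and g_eq: "\<And>\<tau> z. length z = n \<Longrightarrow> g (v @ [\<tau>] @ z) = Some (\<Phi> \<tau> z)"
    and \<Phi>: "preserves_continuity n \<Phi>"
    and D0: "is_interval D0" "0 \<in> D0" and Y: "ode_solution n \<Phi> c D0 Y"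
    and maximal: "\<And>lo hi z. lo \<le> 0 \<Longrightarrow> 0 \<le> hi \<Longrightarrow> ode_solution n \<Phi> c {lo..hi} z
                    \<Longrightarrow> {lo..hi} \<subseteq> D0 \<and> (\<forall>s\<in>{lo..hi}. z s = Y s)"
  shows "PR m n f g (v @ [t]) = (if t \<in> D0 then Some (Y t) else None)"
proof (rule PR_eval_greatest_candidate[OF lv])
  show "(D0, Y) \<in> PR_H n f g v"
    using ode_solution_in_PR_H[of f v c n g \<Phi>] fv g_eq \<Phi> D0 Y by blast
next
  fix D h t assume "(D, h) \<in> PR_H n f g v" "t \<in> D"
  then have "ode_solution n \<Phi> c {min 0 t..max 0 t} h"
    using PR_H_ode_solution[of f v c n g \<Phi>] fv lc g_eq \<Phi> by blast
  then show "t \<in> D0 \<and> h t = Y t"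
    using maximal[of "min 0 t" "max 0 t" h] by auto
qed

definition rfun :: "nat \<Rightarrow> (real list \<Rightarrow> bool) \<Rightarrow> (real list \<Rightarrow> real) \<Rightarrow> pfun" where
  "rfun m P F = (\<lambda>xs. if length xs = m \<and> P xs then Some [F xs] else None)"

lemma rfun_cong:
  "(\<And>xs. length xs = m \<Longrightarrow> P xs = P' xs) \<Longrightarrow> (\<And>xs. length xs = m \<Longrightarrow> P xs \<Longrightarrow> F xs = F' xs)
   \<Longrightarrow> rfun m P F = rfun m P' F'"
  by (rule ext) (auto simp: rfun_def)

lemma juxt_rfun:
  "juxt m (map (\<lambda>(Q, G). rfun m Q G) QGs) =
   (\<lambda>xs. if length xs = m \<and> (\<forall>(Q, G)\<in>set QGs. Q xs) then Some (map (\<lambda>(Q, G). G xs) QGs) else None)"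
proof (rule ext)
  fix xs
  have "length xs = m \<Longrightarrow> (\<forall>g\<in>set (map (\<lambda>(Q, G). rfun m Q G) QGs). g xs \<noteq> None) = (\<forall>(Q, G)\<in>set QGs. Q xs)"
    by (induction QGs) (auto simp: rfun_def split: if_splits)
  moreover have "length xs = m \<Longrightarrow> (\<forall>(Q, G)\<in>set QGs. Q xs) \<Longrightarrow>
      map (\<lambda>g. hd (the (g xs))) (map (\<lambda>(Q, G). rfun m Q G) QGs) = map (\<lambda>(Q, G). G xs) QGs"
    by (induction QGs) (auto simp: rfun_def)
  ultimately show "juxt m (map (\<lambda>(Q, G). rfun m Q G) QGs) xs =
    (if length xs = m \<and> (\<forall>(Q, G)\<in>set QGs. Q xs) then Some (map (\<lambda>(Q, G). G xs) QGs) else None)"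
    unfolding juxt_def by auto
qed

lemma rpr_substitution:
  assumes F: "rpr k 1 (rfun k P F)" and QGs: "\<forall>(Q, G)\<in>set QGs. rpr m 1 (rfun m Q G)"
    and len: "length QGs = k"
  shows "rpr m 1 (rfun m (\<lambda>xs. (\<forall>(Q, G)\<in>set QGs. Q xs) \<and> P (map (\<lambda>(Q, G). G xs) QGs))
                          (\<lambda>xs. F (map (\<lambda>(Q, G). G xs) QGs)))"
proof -
  have "\<forall>g\<in>set (map (\<lambda>(Q, G). rfun m Q G) QGs). rpr m 1 g" using QGs by auto
  then have "rpr m k (juxt m (map (\<lambda>(Q, G). rfun m Q G) QGs))"
    using rpr.juxt len by fastforce
  moreover have "pcomp (rfun k P F) (juxt m (map (\<lambda>(Q, G). rfun m Q G) QGs)) =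
      rfun m (\<lambda>xs. (\<forall>(Q, G)\<in>set QGs. Q xs) \<and> P (map (\<lambda>(Q, G). G xs) QGs))
             (\<lambda>xs. F (map (\<lambda>(Q, G). G xs) QGs))"
    unfolding juxt_rfun by (rule ext) (auto simp: pcomp_def rfun_def len)
  ultimately show ?thesis using rpr.comp[OF F] by metis
qed

lemma rpr_substitution1:
  assumes "rpr 1 1 (rfun 1 P F)" "rpr m 1 (rfun m Q G)"
    and "\<And>xs. length xs = m \<Longrightarrow> P' xs \<longleftrightarrow> Q xs \<and> P [G xs]"
    and "\<And>xs. length xs = m \<Longrightarrow> P' xs \<Longrightarrow> F' xs = F [G xs]"
  shows "rpr m 1 (rfun m P' F')"
proof -
  have "rpr m 1 (rfun m (\<lambda>xs. Q xs \<and> P [G xs]) (\<lambda>xs. F [G xs]))"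
    using rpr_substitution[OF assms(1), of "[(Q, G)]" m] assms(2) by simp
  moreover have "rfun m (\<lambda>xs. Q xs \<and> P [G xs]) (\<lambda>xs. F [G xs]) = rfun m P' F'"
    by (rule rfun_cong) (use assms(3,4) in auto)
  ultimately show ?thesis by simp
qed

lemma rpr_substitution2:
  assumes "rpr 2 1 (rfun 2 P F)" "rpr m 1 (rfun m Q1 G1)" "rpr m 1 (rfun m Q2 G2)"
    and "\<And>xs. length xs = m \<Longrightarrow> P' xs \<longleftrightarrow> Q1 xs \<and> Q2 xs \<and> P [G1 xs, G2 xs]"
    and "\<And>xs. length xs = m \<Longrightarrow> P' xs \<Longrightarrow> F' xs = F [G1 xs, G2 xs]"
  shows "rpr m 1 (rfun m P' F')"
proof -
  have "rpr m 1 (rfun m (\<lambda>xs. (Q1 xs \<and> Q2 xs) \<and> P [G1 xs, G2 xs]) (\<lambda>xs. F [G1 xs, G2 xs]))"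
    using rpr_substitution[OF assms(1), of "[(Q1, G1), (Q2, G2)]" m] assms(2,3) by simp
  moreover have "rfun m (\<lambda>xs. (Q1 xs \<and> Q2 xs) \<and> P [G1 xs, G2 xs]) (\<lambda>xs. F [G1 xs, G2 xs]) = rfun m P' F'"
    by (rule rfun_cong) (use assms(4,5) in auto)
  ultimately show ?thesis by simp
qed

text \<open>Constants 0, 1, -1 of every arity: the nullary constant composed with the empty juxtaposition.\<close>
lemma rpr_const: "c \<in> {0, 1, -1} \<Longrightarrow> rpr m 1 (rfun m (\<lambda>_. True) (\<lambda>_. c))"
proof -
  assume "c \<in> {0, 1, -1}"
  then have "rpr 0 1 (rfun 0 (\<lambda>_. True) (\<lambda>_. c))"
    using rpr.zero rpr.one rpr.mone
    by (auto simp: rfun_def nconst_def[abs_def] cong: if_cong)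
  from rpr_substitution[OF this, of "[]" m] show ?thesis by simp
qed

lemma length_Suc_0_conv_nth: "length xs = 1 \<Longrightarrow> xs = [xs ! 0]"
  by (cases xs) auto

lemma length_2_conv_nth: "length xs = 2 \<Longrightarrow> xs = [xs ! 0, xs ! 1]"
  by (cases xs; cases "tl xs") auto

lemma PR_eval_scalar_ode:
  fixes y :: "real \<Rightarrow> real" and \<phi> :: "real \<Rightarrow> real \<Rightarrow> real"
  assumes lv: "length v = m"
    and Fg: "\<And>\<tau> x. Fg (v @ [\<tau>, x]) = \<phi> \<tau> x"
    and \<phi>_cont: "\<And>S z. continuous_on S z \<Longrightarrow> continuous_on S (\<lambda>s. \<phi> s (z s))"
    and D0: "is_interval D0" "0 \<in> D0"
    and y0: "y 0 = Ff v"
    and dy: "\<And>t. t \<in> D0 \<Longrightarrow> (y has_real_derivative \<phi> t (y t)) (at t within D0)"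
    and maximal: "\<And>lo hi z. lo \<le> 0 \<Longrightarrow> 0 \<le> hi \<Longrightarrow> z 0 = Ff v
       \<Longrightarrow> (\<And>s. s \<in> {lo..hi} \<Longrightarrow> (z has_real_derivative \<phi> s (z s)) (at s within {lo..hi}))
       \<Longrightarrow> {lo..hi} \<subseteq> D0 \<and> (\<forall>s\<in>{lo..hi}. z s = y s)"
  shows "PR m 1 (rfun m (\<lambda>_. True) Ff) (rfun (m+1+1) (\<lambda>_. True) Fg) (v @ [t])
         = (if t \<in> D0 then Some [y t] else None)"
proof (rule PR_eval_ode[where \<Phi>="\<lambda>\<tau> z. [\<phi> \<tau> (z ! 0)]" and c="[Ff v]" and Y="\<lambda>t. [y t]", OF lv])
  show "rfun m (\<lambda>_. True) Ff v = Some [Ff v]" using lv by (simp add: rfun_def)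
  show "rfun (m+1+1) (\<lambda>_. True) Fg (v @ [\<tau>] @ z) = Some [\<phi> \<tau> (z ! 0)]" if z: "length z = 1" for \<tau> z
  proof -
    obtain x where "z = [x]" using length_Suc_0_conv_nth[OF z] by blast
    then show ?thesis using lv Fg[of \<tau> x] by (simp add: rfun_def)
  qed
  show "preserves_continuity 1 (\<lambda>\<tau> z. [\<phi> \<tau> (z ! 0)])"
    unfolding preserves_continuity_def using \<phi>_cont by simp
  show "ode_solution 1 (\<lambda>\<tau> z. [\<phi> \<tau> (z ! 0)]) [Ff v] D0 (\<lambda>t. [y t])"
    unfolding ode_solution_def using y0 dy by simp
  show "{lo..hi} \<subseteq> D0 \<and> (\<forall>s\<in>{lo..hi}. z s = [y s])"
    if "lo \<le> 0" "0 \<le> hi" "ode_solution 1 (\<lambda>\<tau> z. [\<phi> \<tau> (z ! 0)]) [Ff v] {lo..hi} z" for lo hi z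
  proof -
    have z: "\<And>s. s \<in> {lo..hi} \<Longrightarrow> z s = [z s ! 0]"
      using that(3) length_Suc_0_conv_nth unfolding ode_solution_def by blast
    have "{lo..hi} \<subseteq> D0 \<and> (\<forall>s\<in>{lo..hi}. z s ! 0 = y s)"
      by (rule maximal[OF that(1,2)]) (use that(3) in \<open>auto simp: ode_solution_def\<close>)
    then show ?thesis using z by metis
  qed
qed (use D0 in simp_all)

lemma eq_by_equal_derivatives:
  fixes z y d :: "real \<Rightarrow> real"
  assumes "lo \<le> 0" "0 \<le> hi"
    and dz: "\<And>s. s \<in> {lo..hi} \<Longrightarrow> (z has_real_derivative d s) (at s within {lo..hi})"
    and dy: "\<And>s. s \<in> {lo..hi} \<Longrightarrow> (y has_real_derivative d s) (at s within {lo..hi})"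
    and "z 0 = y 0"
  shows "\<forall>s\<in>{lo..hi}. z s = y s"
proof -
  have "\<exists>C. \<forall>s\<in>{lo..hi}. z s - y s = C"
    by (rule has_field_derivative_zero_constant) (use DERIV_diff[OF dz dy] in auto)
  then obtain C where C: "\<forall>s\<in>{lo..hi}. z s - y s = C" by blast
  have "C = 0" using C[rule_format, of 0] assms by simp
  then show ?thesis using C by simp
qed

lemma PR_eval_antiderivative:
  fixes y \<psi> :: "real \<Rightarrow> real"
  assumes lv: "length v = m"
    and Fg: "\<And>\<tau> x. Fg (v @ [\<tau>, x]) = \<psi> \<tau>"
    and y0: "y 0 = Ff v"
    and dy: "\<And>t. (y has_real_derivative \<psi> t) (at t)"
    and \<psi>_cont: "continuous_on UNIV \<psi>"
  shows "PR m 1 (rfun m (\<lambda>_. True) Ff) (rfun (m+1+1) (\<lambda>_. True) Fg) (v @ [t]) = Some [y t]"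
proof -
  have "PR m 1 (rfun m (\<lambda>_. True) Ff) (rfun (m+1+1) (\<lambda>_. True) Fg) (v @ [t])
        = (if t \<in> UNIV then Some [y t] else None)"
  proof (rule PR_eval_scalar_ode[where \<phi>="\<lambda>\<tau> x. \<psi> \<tau>", OF lv Fg])
    show "{lo..hi} \<subseteq> UNIV \<and> (\<forall>s\<in>{lo..hi}. z s = y s)"
      if "lo \<le> 0" "0 \<le> hi" "z 0 = Ff v"
        and dz: "\<And>s. s \<in> {lo..hi} \<Longrightarrow> (z has_real_derivative \<psi> s) (at s within {lo..hi})" for lo hi z
      using eq_by_equal_derivatives[OF that(1,2) dz] dy y0 that(3)
      by (simp add: has_field_derivative_at_within)
  qed (use y0 dy continuous_on_subset[OF \<psi>_cont subset_UNIV] in \<open>auto simp: is_interval_univ\<close>)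
  then show ?thesis by simp
qed

lemma rpr_PR_scalar:
  assumes "rpr m 1 (rfun m (\<lambda>_. True) Ff)" "rpr (m+1+1) 1 (rfun (m+1+1) (\<lambda>_. True) Fg)"
    and "\<And>v t. length v = m \<Longrightarrow> PR m 1 (rfun m (\<lambda>_. True) Ff) (rfun (m+1+1) (\<lambda>_. True) Fg) (v @ [t])
           = (if P (v @ [t]) then Some [F (v @ [t])] else None)"
  shows "rpr (m+1) 1 (rfun (m+1) P F)"
proof -
  have "PR m 1 (rfun m (\<lambda>_. True) Ff) (rfun (m+1+1) (\<lambda>_. True) Fg) = rfun (m+1) P F"
  proof (rule ext)
    fix xs :: "real list"
    show "PR m 1 (rfun m (\<lambda>_. True) Ff) (rfun (m+1+1) (\<lambda>_. True) Fg) xs = rfun (m+1) P F xs"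
    proof (cases "length xs = m + 1")
      case True
      then have "xs = butlast xs @ [last xs]" "length (butlast xs) = m"
        by (auto intro: append_butlast_last_id[symmetric])
      then show ?thesis using assms(3)[of "butlast xs" "last xs"] True by (metis rfun_def)
    qed (simp add: PR_def rfun_def)
  qed
  then show ?thesis using rpr.pr[OF assms(1,2)] by simp
qed

text \<open>Projections, by induction on the arity: the last coordinate t is PR of 0 and the
  constant 1 (t = int_0^t 1); an earlier coordinate is PR of that projection and 0.\<close>
lemma rpr_proj: "i < n \<Longrightarrow> rpr n 1 (rfun n (\<lambda>_. True) (\<lambda>xs. xs ! i))"
proof (induction n arbitrary: i)
  case (Suc m)
  show ?case
  proof (cases "i = m")
    case True
    have "rpr (m+1) 1 (rfun (m+1) (\<lambda>_. True) (\<lambda>xs. xs ! m))"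
    proof (rule rpr_PR_scalar[OF rpr_const rpr_const])
      fix v :: "real list" and t assume lv: "length v = m"
      have "PR m 1 (rfun m (\<lambda>_. True) (\<lambda>_. 0)) (rfun (m+1+1) (\<lambda>_. True) (\<lambda>_. 1)) (v @ [t]) = Some [t]"
        by (rule PR_eval_antiderivative[where \<psi>="\<lambda>_. 1", OF lv]) auto
      then show "PR m 1 (rfun m (\<lambda>_. True) (\<lambda>_. 0)) (rfun (m+1+1) (\<lambda>_. True) (\<lambda>_. 1)) (v @ [t])
            = (if True then Some [(v @ [t]) ! m] else None)"
        using lv by (simp add: nth_append)
    qed simp_all
    then show ?thesis using True by simp
  next
    case False
    then have i: "i < m" using Suc.prems by simp
    have "rpr (m+1) 1 (rfun (m+1) (\<lambda>_. True) (\<lambda>xs. xs ! i))"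
    proof (rule rpr_PR_scalar[OF Suc.IH[OF i] rpr_const])
      fix v :: "real list" and t assume lv: "length v = m"
      have "PR m 1 (rfun m (\<lambda>_. True) (\<lambda>xs. xs ! i)) (rfun (m+1+1) (\<lambda>_. True) (\<lambda>_. 0)) (v @ [t])
            = Some [v ! i]"
        by (rule PR_eval_antiderivative[where \<psi>="\<lambda>_. 0", OF lv]) auto
      then show "PR m 1 (rfun m (\<lambda>_. True) (\<lambda>xs. xs ! i)) (rfun (m+1+1) (\<lambda>_. True) (\<lambda>_. 0)) (v @ [t])
            = (if True then Some [(v @ [t]) ! i] else None)"
        using lv i by (simp add: nth_append)
    qed simp
    then show ?thesis by simp
  qed
qed simp

text \<open>Addition: x + t = x + int_0^t 1.\<close>
lemma rpr_add: "rpr 2 1 (rfun 2 (\<lambda>_. True) (\<lambda>xs. xs ! 0 + xs ! 1))"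
proof -
  have "rpr (1+1) 1 (rfun (1+1) (\<lambda>_. True) (\<lambda>xs. xs ! 0 + xs ! 1))"
  proof (rule rpr_PR_scalar[OF rpr_proj rpr_const])
    fix v :: "real list" and t assume lv: "length v = 1"
    have "PR 1 1 (rfun 1 (\<lambda>_. True) (\<lambda>xs. xs ! 0)) (rfun (1+1+1) (\<lambda>_. True) (\<lambda>_. 1)) (v @ [t])
          = Some [v ! 0 + t]"
      by (rule PR_eval_antiderivative[where \<psi>="\<lambda>_. 1", OF lv]) (auto intro!: derivative_eq_intros)
    then show "PR 1 1 (rfun 1 (\<lambda>_. True) (\<lambda>xs. xs ! 0)) (rfun (1+1+1) (\<lambda>_. True) (\<lambda>_. 1)) (v @ [t])
          = (if True then Some [(v @ [t]) ! 0 + (v @ [t]) ! 1] else None)"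
      using lv by (simp add: nth_append)
  qed simp_all
  then show ?thesis by (simp add: numeral_2_eq_2)
qed

text \<open>Multiplication: x t = int_0^t x.\<close>
lemma rpr_mult: "rpr 2 1 (rfun 2 (\<lambda>_. True) (\<lambda>xs. xs ! 0 * xs ! 1))"
proof -
  have "rpr (1+1) 1 (rfun (1+1) (\<lambda>_. True) (\<lambda>xs. xs ! 0 * xs ! 1))"
  proof (rule rpr_PR_scalar[OF rpr_const rpr_proj])
    fix v :: "real list" and t assume lv: "length v = 1"
    have "PR 1 1 (rfun 1 (\<lambda>_. True) (\<lambda>_. 0)) (rfun (1+1+1) (\<lambda>_. True) (\<lambda>xs. xs ! 0)) (v @ [t])
          = Some [v ! 0 * t]"
      by (rule PR_eval_antiderivative[where \<psi>="\<lambda>_. v ! 0", OF lv])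
         (use lv in \<open>auto intro!: derivative_eq_intros simp: nth_append\<close>)
    then show "PR 1 1 (rfun 1 (\<lambda>_. True) (\<lambda>_. 0)) (rfun (1+1+1) (\<lambda>_. True) (\<lambda>xs. xs ! 0)) (v @ [t])
          = (if True then Some [(v @ [t]) ! 0 * (v @ [t]) ! 1] else None)"
      using lv by (simp add: nth_append)
  qed simp_all
  then show ?thesis by (simp add: numeral_2_eq_2)
qed

lemma rpr_neg: "rpr m 1 (rfun m Q G) \<Longrightarrow> rpr m 1 (rfun m Q (\<lambda>xs. - G xs))"
  by (rule rpr_substitution2[OF rpr_mult _ rpr_const[of "-1"]]) auto

lemma rpr_add_fun:
  "rpr m 1 (rfun m Q1 G1) \<Longrightarrow> rpr m 1 (rfun m Q2 G2)
   \<Longrightarrow> rpr m 1 (rfun m (\<lambda>xs. Q1 xs \<and> Q2 xs) (\<lambda>xs. G1 xs + G2 xs))"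
  by (rule rpr_substitution2[OF rpr_add]) auto

lemma rpr_mult_fun:
  "rpr m 1 (rfun m Q1 G1) \<Longrightarrow> rpr m 1 (rfun m Q2 G2)
   \<Longrightarrow> rpr m 1 (rfun m (\<lambda>xs. Q1 xs \<and> Q2 xs) (\<lambda>xs. G1 xs * G2 xs))"
  by (rule rpr_substitution2[OF rpr_mult]) auto

text \<open>exp is the solution of y' = y, y(0) = 1; it is unique since (z e^{-s})' = 0.\<close>
lemma rpr_exp: "rpr 1 1 (rfun 1 (\<lambda>_. True) (\<lambda>xs. exp (xs ! 0)))"
proof -
  have "rpr (0+1) 1 (rfun (0+1) (\<lambda>_. True) (\<lambda>xs. exp (xs ! 0)))"
  proof (rule rpr_PR_scalar[OF rpr_const rpr_proj])
    fix v :: "real list" and t assume lv: "length v = 0"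
    have "PR 0 1 (rfun 0 (\<lambda>_. True) (\<lambda>_. 1)) (rfun (0+1+1) (\<lambda>_. True) (\<lambda>xs. xs ! 1)) (v @ [t])
          = (if t \<in> UNIV then Some [exp t] else None)"
    proof (rule PR_eval_scalar_ode[where \<phi>="\<lambda>\<tau> x. x", OF lv])
      show "{lo..hi} \<subseteq> UNIV \<and> (\<forall>s\<in>{lo..hi}. z s = exp s)"
        if "lo \<le> 0" "0 \<le> hi" "z 0 = 1"
          and dz: "\<And>s. s \<in> {lo..hi} \<Longrightarrow> (z has_real_derivative z s) (at s within {lo..hi})" for lo hi z
      proof -
        have "\<forall>s\<in>{lo..hi}. z s * exp (- s) = 1"
        proof (rule eq_by_equal_derivatives[OF that(1,2), where d="\<lambda>_. 0"])
          fix s assume s: "s \<in> {lo..hi}"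
          show "((\<lambda>s. z s * exp (- s)) has_real_derivative 0) (at s within {lo..hi})"
            using dz[OF s] by (auto intro!: derivative_eq_intros)
        qed (use that(3) in auto)
        then show ?thesis by (simp add: exp_minus field_simps)
      qed
    qed (use lv in \<open>auto intro: DERIV_exp\<close>)
    then show "PR 0 1 (rfun 0 (\<lambda>_. True) (\<lambda>_. 1)) (rfun (0+1+1) (\<lambda>_. True) (\<lambda>xs. xs ! 1)) (v @ [t])
          = (if True then Some [exp ((v @ [t]) ! 0)] else None)"
      using lv by simp
  qed simp_all
  then show ?thesis by simp
qed

text \<open>ln(1 + t) is the maximal solution of y' = e^{-y}, y(0) = 0: any solution z satisfies
  e^{z(s)} = 1 + s, which forces s > -1.\<close>
lemma rpr_ln_1_plus: "rpr 1 1 (rfun 1 (\<lambda>xs. xs ! 0 > -1) (\<lambda>xs. ln (1 + xs ! 0)))"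
proof -
  have neg: "rpr 2 1 (rfun 2 (\<lambda>_. True) (\<lambda>xs. - (xs ! 1)))"
    by (rule rpr_neg, rule rpr_proj) simp
  have "rpr 2 1 (rfun 2 (\<lambda>_. True) (\<lambda>xs. exp (- (xs ! 1))))"
    by (rule rpr_substitution1[OF rpr_exp neg]) auto
  then have g: "rpr (0+1+1) 1 (rfun (0+1+1) (\<lambda>_. True) (\<lambda>xs. exp (- (xs ! 1))))"
    by (simp add: numeral_2_eq_2)
  have "rpr (0+1) 1 (rfun (0+1) (\<lambda>xs. xs ! 0 > -1) (\<lambda>xs. ln (1 + xs ! 0)))"
  proof (rule rpr_PR_scalar[OF rpr_const g])
    fix v :: "real list" and t assume lv: "length v = 0"
    have "PR 0 1 (rfun 0 (\<lambda>_. True) (\<lambda>_. 0)) (rfun (0+1+1) (\<lambda>_. True) (\<lambda>xs. exp (- (xs ! 1)))) (v @ [t])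
          = (if t \<in> {-1<..} then Some [ln (1 + t)] else None)"
    proof (rule PR_eval_scalar_ode[where \<phi>="\<lambda>\<tau> x. exp (- x)", OF lv])
      show "((\<lambda>t. ln (1 + t)) has_real_derivative exp (- ln (1 + t))) (at t within {-1<..})"
        if "t \<in> {-1<..}" for t :: real
        using that by (auto intro!: derivative_eq_intros simp: exp_minus field_simps)
      show "{lo..hi} \<subseteq> {-1<..} \<and> (\<forall>s\<in>{lo..hi}. z s = ln (1 + s))"
        if "lo \<le> 0" "0 \<le> hi" "z 0 = 0"
          and dz: "\<And>s. s \<in> {lo..hi} \<Longrightarrow> (z has_real_derivative exp (- z s)) (at s within {lo..hi})"
        for lo hi z
      proof -
        have e: "\<forall>s\<in>{lo..hi}. exp (z s) = 1 + s"
        proof (rule eq_by_equal_derivatives[OF that(1,2), where d="\<lambda>_. 1"])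
          fix s assume s: "s \<in> {lo..hi}"
          show "((\<lambda>s. exp (z s)) has_real_derivative 1) (at s within {lo..hi})"
            using dz[OF s] by (auto intro!: derivative_eq_intros simp: exp_minus)
        qed (use that(3) in \<open>auto intro!: derivative_eq_intros\<close>)
        have "{lo..hi} \<subseteq> {-1<..}"
        proof
          fix s assume "s \<in> {lo..hi}"
          then have "0 < 1 + s" using e exp_gt_zero[of "z s"] by simp
          then show "s \<in> {-1<..}" by simp
        qed
        moreover have "\<forall>s\<in>{lo..hi}. z s = ln (1 + s)"
          using e by (metis ln_exp)
        ultimately show ?thesis by simp
      qed
    qed (use lv in \<open>auto intro!: continuous_intros\<close>)
    then show "PR 0 1 (rfun 0 (\<lambda>_. True) (\<lambda>_. 0)) (rfun (0+1+1) (\<lambda>_. True) (\<lambda>xs. exp (- (xs ! 1)))) (v @ [t])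
          = (if (v @ [t]) ! 0 > -1 then Some [ln (1 + (v @ [t]) ! 0)] else None)"
      using lv by simp
  qed simp
  then show ?thesis by simp
qed

text \<open>ln x = ln(1 + (x - 1)), 1/x = e^{-ln x} and sqrt x = e^{(ln x)/2} on (0, oo).\<close>
lemma rpr_ln: "rpr 1 1 (rfun 1 (\<lambda>xs. xs ! 0 > 0) (\<lambda>xs. ln (xs ! 0)))"
proof -
  have "rpr 1 1 (rfun 1 (\<lambda>xs. True \<and> True) (\<lambda>xs. xs ! 0 + -1))"
    by (rule rpr_add_fun[OF rpr_proj rpr_const]) auto
  then show ?thesis by (rule rpr_substitution1[OF rpr_ln_1_plus]) auto
qed

lemma rpr_inverse: "rpr 1 1 (rfun 1 (\<lambda>xs. xs ! 0 > 0) (\<lambda>xs. 1 / xs ! 0))"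
  by (rule rpr_substitution1[OF rpr_exp rpr_neg[OF rpr_ln]]) (auto simp: exp_minus inverse_eq_divide)

lemma rpr_half: "rpr m 1 (rfun m (\<lambda>_. True) (\<lambda>_. 1 / 2))"
proof -
  have "rpr m 1 (rfun m (\<lambda>xs. True \<and> True) (\<lambda>xs. 1 + 1))"
    by (rule rpr_add_fun[OF rpr_const rpr_const]) auto
  then show ?thesis by (rule rpr_substitution1[OF rpr_inverse]) auto
qed

lemma rpr_sqrt: "rpr 1 1 (rfun 1 (\<lambda>xs. xs ! 0 > 0) (\<lambda>xs. sqrt (xs ! 0)))"
proof -
  have half_ln: "rpr 1 1 (rfun 1 (\<lambda>xs. xs ! 0 > 0 \<and> True) (\<lambda>xs. ln (xs ! 0) * (1 / 2)))"
    by (rule rpr_mult_fun[OF rpr_ln rpr_half])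
  have sqrt_exp: "sqrt x = exp (ln x * (1 / 2))" if "0 < x" for x :: real
    using powr_half_sqrt[of x] that by (simp add: powr_def mult.commute)
  show ?thesis by (rule rpr_substitution1[OF rpr_exp half_ln]) (auto simp: sqrt_exp)
qed

text \<open>arctan t = int_0^t 1/(1 + s^2), and pi = 4 arctan 1.\<close>
lemma rpr_arctan: "rpr 1 1 (rfun 1 (\<lambda>_. True) (\<lambda>xs. arctan (xs ! 0)))"
proof -
  have pos: "0 < 1 + x * x" for x :: real
    using not_sum_squares_lt_zero[of 1 x] by (simp add: add_pos_nonneg)
  have x: "rpr 2 1 (rfun 2 (\<lambda>_. True) (\<lambda>xs. xs ! 0))" by (rule rpr_proj) simp
  have "rpr 2 1 (rfun 2 (\<lambda>xs. True \<and> (True \<and> True)) (\<lambda>xs. 1 + xs ! 0 * xs ! 0))"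
    by (rule rpr_add_fun[OF rpr_const rpr_mult_fun[OF x x]]) simp
  then have "rpr 2 1 (rfun 2 (\<lambda>_. True) (\<lambda>xs. 1 / (1 + xs ! 0 * xs ! 0)))"
    by (rule rpr_substitution1[OF rpr_inverse]) (auto simp: pos)
  then have g: "rpr (0+1+1) 1 (rfun (0+1+1) (\<lambda>_. True) (\<lambda>xs. 1 / (1 + xs ! 0 * xs ! 0)))"
    by (simp add: numeral_2_eq_2)
  have "rpr (0+1) 1 (rfun (0+1) (\<lambda>_. True) (\<lambda>xs. arctan (xs ! 0)))"
  proof (rule rpr_PR_scalar[OF rpr_const g])
    fix v :: "real list" and t assume lv: "length v = 0"
    have "PR 0 1 (rfun 0 (\<lambda>_. True) (\<lambda>_. 0)) (rfun (0+1+1) (\<lambda>_. True) (\<lambda>xs. 1 / (1 + xs ! 0 * xs ! 0)))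
            (v @ [t]) = Some [arctan t]"
    proof (rule PR_eval_antiderivative[where \<psi>="\<lambda>\<tau>. 1 / (1 + \<tau> * \<tau>)", OF lv])
      show "(arctan has_real_derivative 1 / (1 + t * t)) (at t)" for t
        using DERIV_arctan[of t] by (simp add: power2_eq_square inverse_eq_divide)
      show "continuous_on UNIV (\<lambda>\<tau>::real. 1 / (1 + \<tau> * \<tau>))"
        using pos by (intro continuous_intros) (simp add: less_imp_neq[symmetric])
    qed (use lv in auto)
    then show "PR 0 1 (rfun 0 (\<lambda>_. True) (\<lambda>_. 0)) (rfun (0+1+1) (\<lambda>_. True) (\<lambda>xs. 1 / (1 + xs ! 0 * xs ! 0)))
            (v @ [t]) = (if True then Some [arctan ((v @ [t]) ! 0)] else None)"
      using lv by simp
  qed simp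
  then show ?thesis by simp
qed

lemma rpr_pi: "rpr 0 1 (rfun 0 (\<lambda>_. True) (\<lambda>_. pi))"
proof -
  have one: "rpr 0 1 (rfun 0 (\<lambda>_. True) (\<lambda>_. 1))" by (rule rpr_const) simp
  have two: "rpr 0 1 (rfun 0 (\<lambda>xs. True \<and> True) (\<lambda>xs. 1 + 1))" by (rule rpr_add_fun[OF one one])
  have four: "rpr 0 1 (rfun 0 (\<lambda>xs. (True \<and> True) \<and> (True \<and> True)) (\<lambda>xs. (1 + 1) + (1 + 1)))"
    by (rule rpr_add_fun[OF two two])
  have "rpr 0 1 (rfun 0 (\<lambda>_. True) (\<lambda>_. arctan 1))" by (rule rpr_substitution1[OF rpr_arctan one]) auto
  then show ?thesis by (rule rpr_substitution2[OF rpr_mult four]) auto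
qed

text \<open>(sin, cos) is the solution of the system (s, c)' = (c, -s), (s, c)(0) = (0, 1).\<close>
definition sin_cos_init :: pfun where
  "sin_cos_init = juxt 0 [nconst 0, nconst 1]"

definition sin_cos_rhs :: pfun where
  "sin_cos_rhs = juxt 3 [rfun 3 (\<lambda>_. True) (\<lambda>xs. xs ! 2), rfun 3 (\<lambda>_. True) (\<lambda>xs. - (xs ! 1))]"

lemma rpr_sin_cos: "rpr 1 2 (PR 0 2 sin_cos_init sin_cos_rhs)"
proof -
  have "rpr 0 2 sin_cos_init"
    unfolding sin_cos_init_def using rpr.juxt[of "[nconst 0, nconst 1]" 0] rpr.zero rpr.one
    by (simp add: numeral_2_eq_2)
  moreover have "rpr 3 2 sin_cos_rhs"
    unfolding sin_cos_rhs_def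
    using rpr.juxt[of "[rfun 3 (\<lambda>_. True) (\<lambda>xs. xs ! 2), rfun 3 (\<lambda>_. True) (\<lambda>xs. - (xs ! 1))]" 3]
      rpr_proj[of 2 3] rpr_neg[OF rpr_proj[of 1 3]] by (simp add: numeral_2_eq_2)
  ultimately show ?thesis using rpr.pr[of 0 2 sin_cos_init sin_cos_rhs] by (simp add: numeral_3_eq_3)
qed

text \<open>Uniqueness: for any solution z the squared distance from (sin, cos) has derivative 0.\<close>
lemma PR_sin_cos_eval: "PR 0 2 sin_cos_init sin_cos_rhs [t] = Some [sin t, cos t]"
proof -
  have "PR 0 2 sin_cos_init sin_cos_rhs ([] @ [t]) = (if t \<in> UNIV then Some [sin t, cos t] else None)"
  proof (rule PR_eval_ode[where c="[0, 1]" and \<Phi>="\<lambda>\<tau> z. [z ! 1, - (z ! 0)]"])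
    show "sin_cos_init [] = Some [0, 1]" by (simp add: sin_cos_init_def juxt_def nconst_def)
    show "sin_cos_rhs ([] @ [\<tau>] @ z) = Some [z ! 1, - z ! 0]" if "length z = 2" for \<tau> z
      using that by (simp add: sin_cos_rhs_def juxt_def rfun_def)
    show "preserves_continuity 2 (\<lambda>\<tau> z. [z ! 1, - (z ! 0)])"
      unfolding preserves_continuity_def
      by (auto intro!: continuous_intros simp: less_2_cases_iff)
    show "ode_solution 2 (\<lambda>\<tau> z. [z ! 1, - (z ! 0)]) [0, 1] UNIV (\<lambda>s. [sin s, cos s])"
      unfolding ode_solution_def by (auto intro!: derivative_eq_intros simp: less_2_cases_iff)
    show "{lo..hi} \<subseteq> UNIV \<and> (\<forall>s\<in>{lo..hi}. z s = [sin s, cos s])"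
      if lo: "lo \<le> 0" and hi: "0 \<le> hi" and z: "ode_solution 2 (\<lambda>\<tau> z. [z ! 1, - (z ! 0)]) [0, 1] {lo..hi} z"
      for lo hi z
    proof -
      define e where "e s = (z s ! 0 - sin s)\<^sup>2 + (z s ! 1 - cos s)\<^sup>2" for s
      have dz: "((\<lambda>s. z s ! k) has_real_derivative [z s ! 1, - z s ! 0] ! k) (at s within {lo..hi})"
        if "s \<in> {lo..hi}" "k < 2" for s k
        using z that unfolding ode_solution_def by blast
      have d0: "((\<lambda>s. z s ! 0) has_real_derivative z s ! 1) (at s within {lo..hi})"
        and d1: "((\<lambda>s. z s ! 1) has_real_derivative - z s ! 0) (at s within {lo..hi})"
        if "s \<in> {lo..hi}" for s
        using dz[OF that, of 0] dz[OF that, of 1] by simp_all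
      have "\<forall>s\<in>{lo..hi}. e s = 0"
      proof (rule eq_by_equal_derivatives[OF lo hi, where d="\<lambda>_. 0"])
        fix s assume s: "s \<in> {lo..hi}"
        have "(e has_real_derivative
               2 * (z s ! 0 - sin s) * (z s ! 1 - cos s) + 2 * (z s ! 1 - cos s) * (- z s ! 0 + sin s))
               (at s within {lo..hi})"
          unfolding e_def[abs_def] using d0[OF s] d1[OF s]
          by (auto intro!: derivative_eq_intros simp: algebra_simps)
        then show "(e has_real_derivative 0) (at s within {lo..hi})"
          by (simp add: algebra_simps)
      qed (use z in \<open>auto simp: e_def ode_solution_def\<close>)
      then have "z s = [sin s, cos s]" if s: "s \<in> {lo..hi}" for s
        using length_2_conv_nth[of "z s"] z s unfolding e_def ode_solution_def
        by (auto simp: sum_power2_eq_zero_iff)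
      then show ?thesis by simp
    qed
  qed (simp_all add: is_interval_univ)
  then show ?thesis by simp
qed

lemma rpr_sin_cos_component:
  assumes "i < 2"
  shows "rpr 1 1 (rfun 1 (\<lambda>_. True) (\<lambda>xs. [sin (xs ! 0), cos (xs ! 0)] ! i))"
proof -
  have "pcomp (rfun 2 (\<lambda>_. True) (\<lambda>xs. xs ! i)) (PR 0 2 sin_cos_init sin_cos_rhs)
        = rfun 1 (\<lambda>_. True) (\<lambda>xs. [sin (xs ! 0), cos (xs ! 0)] ! i)"
  proof (rule ext)
    fix xs :: "real list"
    show "pcomp (rfun 2 (\<lambda>_. True) (\<lambda>xs. xs ! i)) (PR 0 2 sin_cos_init sin_cos_rhs) xs
          = rfun 1 (\<lambda>_. True) (\<lambda>xs. [sin (xs ! 0), cos (xs ! 0)] ! i) xs"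
    proof (cases "length xs = 1")
      case True
      then have "xs = [xs ! 0]" by (rule length_Suc_0_conv_nth)
      then have "PR 0 2 sin_cos_init sin_cos_rhs xs = Some [sin (xs ! 0), cos (xs ! 0)]"
        by (metis PR_sin_cos_eval)
      then show ?thesis using True by (simp add: pcomp_def rfun_def)
    qed (simp add: pcomp_def rfun_def PR_def)
  qed
  then show ?thesis using rpr.comp[OF rpr_proj[OF assms] rpr_sin_cos] by simp
qed

lemma rpr_sin: "rpr 1 1 (rfun 1 (\<lambda>_. True) (\<lambda>xs. sin (xs ! 0)))"
  using rpr_sin_cos_component[of 0] by simp

lemma rpr_cos: "rpr 1 1 (rfun 1 (\<lambda>_. True) (\<lambda>xs. cos (xs ! 0)))"
  using rpr_sin_cos_component[of 1] by simp

theorem lemma3p2: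
  shows "(\<forall>n::nat. \<forall>c::real. c \<in> {0, 1, -1} \<longrightarrow>
            rpr n 1 (\<lambda>xs. if length xs = n then Some [c] else None))
       \<and> (\<forall>n i::nat. i < n \<longrightarrow>
            rpr n 1 (\<lambda>xs. if length xs = n then Some [xs ! i] else None))
       \<and> rpr 2 1 (\<lambda>xs. if length xs = 2 then Some [xs ! 0 + xs ! 1] else None)
       \<and> rpr 2 1 (\<lambda>xs. if length xs = 2 then Some [xs ! 0 * xs ! 1] else None)
       \<and> rpr 1 1 (\<lambda>xs. if length xs = 1 \<and> xs ! 0 > 0 then Some [1 / xs ! 0] else None)
       \<and> rpr 1 1 (\<lambda>xs. if length xs = 1 \<and> xs ! 0 > 0 then Some [sqrt (xs ! 0)] else None)
       \<and> rpr 1 1 (\<lambda>xs. if length xs = 1 \<and> xs ! 0 > 0 then Some [ln (xs ! 0)] else None)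
       \<and> rpr 1 1 (\<lambda>xs. if length xs = 1 then Some [sin (xs ! 0)] else None)
       \<and> rpr 1 1 (\<lambda>xs. if length xs = 1 then Some [cos (xs ! 0)] else None)
       \<and> rpr 1 1 (\<lambda>xs. if length xs = 1 then Some [exp (xs ! 0)] else None)
       \<and> rpr 0 1 (\<lambda>xs. if xs = [] then Some [pi] else None)"
  using rpr_const rpr_proj rpr_add rpr_mult rpr_inverse rpr_sqrt rpr_ln
    rpr_sin rpr_cos rpr_exp rpr_pi
  unfolding rfun_def by simp

end
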